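(* Let $n\ge 3$ be an odd integer and let $P_n$ denote the set of odd primes $p$ with $3\le p\le n$. Let $\pi_{\mathrm{odd}}(n^2)=\pi(n^2)-1$ be the number of odd primes not exceeding $n^2$. Define $\mathrm{dup}=\sum_k \mathrm{dup}_n(k)$, the sum over odd integers $k$ with $1<k\le n^2$, and for $p\in P_n$, $B_p=\dfrac{(n^2-p)\bmod 2p+p}{2p}$. Then $$\pi_{\mathrm{odd}}(n^2)=\mathrm{dup}+\sum_{p\in P_n}B_p-\frac12-\frac{n^2}{2}\left(\sum_{p\in P_n}\frac1p-1\right).$$
   Context: For an integer $a$ and a positive integer $m$, $a \bmod m$ denotes the unique $r\in\{0,\dots,m-1\}$ with $a\equiv r\pmod m$. $\pi(x)$ is the number of primes $\le x$. For a positive integer $n$ and an odd integer $k$, let $m_n(k)$ be the number of distinct primes $p\le n$ dividing $k$, and define $\mathrm{dup}_n(k)=0$ if $m_n(k)=0$ and $\mathrm{dup}_n(k)=m_n(k)-1$ otherwise. *)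

theory Defs
  imports Complex_Main "HOL-Computational_Algebra.Primes"
begin

definition m_n :: "int \<Rightarrow> int \<Rightarrow> nat" where
  "m_n n k = card {p::int. prime p \<and> p \<le> n \<and> p dvd k}"

text \<open>dup_n(k) = 0 if m_n(k) = 0, else m_n(k) - 1 (nat subtraction realizes exactly this).\<close>
definition dup_n :: "int \<Rightarrow> int \<Rightarrow> nat" where
  "dup_n n k = (if m_n n k = 0 then 0 else m_n n k - 1)"

definition prime_pi :: "int \<Rightarrow> nat" where
  "prime_pi x = card {p::int. prime p \<and> p \<le> x}"

end

theory Submission
  imports Defs
begin

(*
  Sieve of Eratosthenes: an odd k in (1, n^2] has no prime factor <= n exactly when it is a
  prime in (n, n^2], so the odd primes up to n^2 are those up to n together with the odd k
  with m_n(k) = 0. Since dup_n(k) = m_n(k) - 1 in truncated arithmetic, summing over the odd k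
  gives dup = sum m_n(k) - #{k. m_n(k) > 0}; counting the pairs (p, k) with p | k the other way
  round turns sum m_n(k) into the sum over p of the number of odd multiples of p up to n^2,
  which is floor((n^2 + p) / 2p) = n^2/2p + 1 - B_p.
*)

definition odd_numbers_upto :: "int \<Rightarrow> int set" where
  "odd_numbers_upto N = {k. odd k \<and> 1 < k \<and> k \<le> N}"

definition odd_primes_upto :: "int \<Rightarrow> int set" where
  "odd_primes_upto n = {p. prime p \<and> odd p \<and> 3 \<le> p \<and> p \<le> n}"

lemma finite_odd_numbers_upto [simp]: "finite (odd_numbers_upto N)"
  unfolding odd_numbers_upto_def by (rule finite_subset[of _ "{0..N}"]) auto

lemma finite_odd_primes_upto [simp]: "finite (odd_primes_upto n)"
  unfolding odd_primes_upto_def by (rule finite_subset[of _ "{0..n}"]) auto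

lemma card_odd_numbers_upto: "card (odd_numbers_upto N) = nat ((N - 1) div 2)"
proof -
  have "odd_numbers_upto N = (\<lambda>j. 2*j + 1) ` {1..(N - 1) div 2}"
    unfolding odd_numbers_upto_def by (auto elim!: oddE)
  moreover have "inj_on (\<lambda>j::int. 2*j + 1) A" for A by (auto simp: inj_on_def)
  ultimately show ?thesis by (simp add: card_image)
qed

lemma int_le_div_iff_mult:
  fixes a b c :: int
  assumes "0 < b"
  shows "a \<le> c div b \<longleftrightarrow> b * a \<le> c"
  using assms by (smt (verit) minus_mod_eq_mult_div nonzero_mult_div_cancel_left pos_mod_sign zdiv_mono1)

lemma card_odd_multiples_upto:
  fixes p N :: int
  assumes "odd p" "p > 1" "N \<ge> 0"
  shows "int (card {k \<in> odd_numbers_upto N. p dvd k}) = (N + p) div (2*p)"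
proof -
  define d where "d = (N + p) div (2*p)"
  have bound: "p*(2*j + 1) \<le> N \<longleftrightarrow> j < d" for j
  proof -
    have "p*(2*j + 1) \<le> N \<longleftrightarrow> (2*p)*(j + 1) \<le> N + p" by (simp add: algebra_simps)
    also have "\<dots> \<longleftrightarrow> j + 1 \<le> d" unfolding d_def using assms by (simp add: int_le_div_iff_mult)
    finally show ?thesis by linarith
  qed
  have "{k \<in> odd_numbers_upto N. p dvd k} = (\<lambda>j. p*(2*j + 1)) ` {0..<d}"
  proof (intro set_eqI iffI)
    fix k assume "k \<in> {k \<in> odd_numbers_upto N. p dvd k}"
    then have k: "odd k" "1 < k" "k \<le> N" "p dvd k" by (auto simp: odd_numbers_upto_def)
    then obtain q where q: "k = p*q" by blast
    then obtain j where "q = 2*j + 1" using k by (auto elim: oddE)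
    moreover have "q > 0" using zero_less_mult_pos[of p q] k q assms by linarith
    ultimately show "k \<in> (\<lambda>j. p*(2*j + 1)) ` {0..<d}" using k q bound by auto
  next
    fix k assume "k \<in> (\<lambda>j. p*(2*j + 1)) ` {0..<d}"
    then obtain j where j: "0 \<le> j" "j < d" "k = p*(2*j + 1)" by auto
    have "p \<le> k" using j assms unfolding j(3) by (simp add: mult_le_cancel_left1)
    then have "1 < k" using assms by linarith
    then show "k \<in> {k \<in> odd_numbers_upto N. p dvd k}"
      using j bound[of j] assms by (simp add: odd_numbers_upto_def)
  qed
  moreover have "inj_on (\<lambda>j. p*(2*j + 1)) A" for A using assms by (auto simp: inj_on_def)
  moreover have "d \<ge> 0" unfolding d_def using assms by (simp add: pos_imp_zdiv_nonneg_iff)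
  ultimately show ?thesis by (simp add: card_image d_def)
qed

lemma of_int_div_double:
  fixes N p :: int
  assumes "p \<noteq> 0"
  shows "real_of_int ((N + p) div (2*p)) =
           real_of_int N / (2*p) + 1 - real_of_int ((N - p) mod (2*p) + p) / real_of_int (2*p)"
proof -
  define d where "d = (N + p) div (2*p)"
  define r where "r = (N - p) mod (2*p)"
  have "(N + p) mod (2*p) = r"
    unfolding r_def using mod_add_self2[of "N - p" "2*p"] by (simp add: add.commute)
  then have "N + p = 2*p*d + r" unfolding d_def using mult_div_mod_eq[of "2*p" "N + p"] by simp
  then have N: "real_of_int N = 2*p*real_of_int d + r - p"
    using arg_cong[of _ _ real_of_int] by fastforce
  show ?thesis unfolding d_def[symmetric] r_def[symmetric] N using assms
    by (simp add: field_simps)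
qed

lemma dup_n_eq: "dup_n n k = m_n n k - 1"
  by (simp add: dup_n_def)

lemma sum_diff_one_plus_card:
  fixes f :: "'a \<Rightarrow> nat"
  assumes "finite A"
  shows "(\<Sum>a\<in>A. f a - 1) + card A = sum f A + card {a \<in> A. f a = 0}"
proof -
  have "(\<Sum>a\<in>A. f a - 1) + card A = (\<Sum>a\<in>A. f a - 1 + 1)"
    by (simp only: sum.distrib card_eq_sum)
  also have "\<dots> = (\<Sum>a\<in>A. f a + (if f a = 0 then 1 else 0))"
    by (rule sum.cong) auto
  also have "\<dots> = sum f A + card {a \<in> A. f a = 0}"
    using assms by (simp add: sum.distrib sum.If_cases Int_def)
  finally show ?thesis .
qed

lemma prime_factor_le_if_le_square:
  fixes n k :: int
  assumes "0 \<le> n" "1 < k" "k \<le> n\<^sup>2" "\<not> prime k"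
  shows "\<exists>p. prime p \<and> p \<le> n \<and> p dvd k"
proof -
  obtain p where p: "prime p" "p dvd k" using prime_factor_int[of k] assms by auto
  then obtain q where q: "k = p*q" by blast
  have "p > 1" using p prime_gt_1_int by blast
  then have "q > 0" using zero_less_mult_pos[of p q] q assms by linarith
  moreover have "q \<noteq> 1" using p q assms by auto
  ultimately obtain r where r: "prime r" "r dvd q" using prime_factor_int[of q] by auto
  have "r \<le> q" using r \<open>q > 0\<close> by (simp add: zdvd_imp_le)
  have "p \<le> n \<or> q \<le> n"
  proof (rule ccontr)
    assume "\<not> (p \<le> n \<or> q \<le> n)"
    then have "n*n < p*q" using assms by (intro mult_strict_mono) auto
    then show False using assms q by (simp add: power2_eq_square)
  qed
  then show ?thesis using p r q \<open>r \<le> q\<close> by (auto intro: dvd_mult_left)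
qed

lemma m_n_eq_0_iff:
  fixes n k :: int
  assumes "0 \<le> n" "1 < k" "k \<le> n\<^sup>2"
  shows "m_n n k = 0 \<longleftrightarrow> prime k \<and> n < k"
proof -
  have "finite {p. prime p \<and> p \<le> n \<and> p dvd k}"
    by (rule finite_subset[of _ "{0..n}"]) (auto dest: prime_gt_0_int)
  then have "m_n n k = 0 \<longleftrightarrow> \<not> (\<exists>p. prime p \<and> p \<le> n \<and> p dvd k)"
    unfolding m_n_def by simp
  also have "\<dots> \<longleftrightarrow> prime k \<and> n < k"
  proof
    assume none: "\<not> (\<exists>p. prime p \<and> p \<le> n \<and> p dvd k)"
    then have "prime k" using prime_factor_le_if_le_square[OF assms] by blast
    moreover have "n < k" using none \<open>prime k\<close> by (meson dvd_refl not_le)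
    ultimately show "prime k \<and> n < k" ..
  next
    assume "prime k \<and> n < k"
    then show "\<not> (\<exists>p. prime p \<and> p \<le> n \<and> p dvd k)" by (auto dest: primes_dvd_imp_eq)
  qed
  finally show ?thesis .
qed

lemma m_n_odd:
  assumes "odd k"
  shows "m_n n k = card {p \<in> odd_primes_upto n. p dvd k}"
proof -
  have "p \<ge> 3" if "prime p" "odd p" for p :: int
    using prime_gt_1_int[OF that(1)] that(2) by presburger
  moreover have "odd p" if "p dvd k" for p using assms that by (auto dest: dvd_trans)
  ultimately have "{p. prime p \<and> p \<le> n \<and> p dvd k} = {p \<in> odd_primes_upto n. p dvd k}"
    unfolding odd_primes_upto_def by blast
  then show ?thesis unfolding m_n_def by simp
qed

lemma sum_m_n_odd_numbers_upto:
  fixes n N :: int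
  assumes "N \<ge> 0"
  shows "int (\<Sum>k\<in>odd_numbers_upto N. m_n n k) = (\<Sum>p\<in>odd_primes_upto n. (N + p) div (2*p))"
proof -
  have "(\<Sum>k\<in>odd_numbers_upto N. m_n n k) =
      (\<Sum>k\<in>odd_numbers_upto N. card {p \<in> odd_primes_upto n. p dvd k})"
    by (intro sum.cong) (auto simp: m_n_odd odd_numbers_upto_def)
  also have "\<dots> = (\<Sum>p\<in>odd_primes_upto n. card {k \<in> odd_numbers_upto N. p dvd k})"
    by (intro sum_multicount_gen) auto
  finally show ?thesis
    using assms card_odd_multiples_upto by (simp add: odd_primes_upto_def)
qed

lemma prime_pi_square:
  fixes n :: int
  assumes "n \<ge> 2"
  shows "prime_pi (n\<^sup>2) =
           1 + card (odd_primes_upto n) + card {k \<in> odd_numbers_upto (n\<^sup>2). m_n n k = 0}"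
proof -
  define Z where "Z = {k \<in> odd_numbers_upto (n\<^sup>2). m_n n k = 0}"
  have Z: "Z = {k. prime k \<and> odd k \<and> n < k \<and> k \<le> n\<^sup>2}"
    unfolding Z_def odd_numbers_upto_def using assms m_n_eq_0_iff[of n] prime_gt_1_int by auto
  have "n \<le> n\<^sup>2" using assms by (simp add: power2_eq_square)
  then have "{p. prime p \<and> p \<le> n\<^sup>2} = insert 2 (odd_primes_upto n \<union> Z)"
  proof (intro set_eqI iffI)
    fix p assume "p \<in> {p. prime p \<and> p \<le> n\<^sup>2}"
    then have p: "prime p" "p \<le> n\<^sup>2" by auto
    show "p \<in> insert 2 (odd_primes_upto n \<union> Z)"
    proof (cases "p = 2")
      case False
      then have "p > 2" using prime_ge_2_int[OF p(1)] by simp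
      then show ?thesis using p prime_odd_int[OF p(1)] unfolding Z odd_primes_upto_def by auto
    qed simp
  qed (use assms in \<open>auto simp: Z odd_primes_upto_def\<close>)
  moreover have "2 \<notin> odd_primes_upto n \<union> Z" "odd_primes_upto n \<inter> Z = {}"
    unfolding Z odd_primes_upto_def by auto
  moreover have "finite Z" unfolding Z_def by simp
  ultimately show ?thesis unfolding prime_pi_def Z_def[symmetric] by (simp add: card_Un_disjoint)
qed

theorem mainTheorem11:
  fixes n :: int
  assumes "odd n" and "n \<ge> 3"
  defines "P \<equiv> {p::int. prime p \<and> odd p \<and> 3 \<le> p \<and> p \<le> n}"
  defines "dup \<equiv> (\<Sum>k\<in>{k::int. odd k \<and> 1 < k \<and> k \<le> n\<^sup>2}. dup_n n k)"
  defines "B \<equiv> (\<lambda>p::int. real_of_int ((n\<^sup>2 - p) mod (2*p) + p) / real_of_int (2*p))"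
  shows "real (prime_pi (n\<^sup>2)) - 1 =
           real dup + (\<Sum>p\<in>P. B p) - 1/2
           - (real_of_int (n\<^sup>2) / 2) * ((\<Sum>p\<in>P. 1 / real_of_int p) - 1)"
proof -
  define K where "K = odd_numbers_upto (n\<^sup>2)"
  define Z where "Z = {k \<in> K. m_n n k = 0}"
  have P: "P = odd_primes_upto n" unfolding P_def odd_primes_upto_def ..
  have "dup = (\<Sum>k\<in>K. m_n n k - 1)"
    unfolding dup_def K_def odd_numbers_upto_def dup_n_eq ..
  then have "dup + card K = (\<Sum>k\<in>K. m_n n k) + card Z"
    unfolding Z_def using sum_diff_one_plus_card[of K "m_n n"] by (simp add: K_def)
  then have dup: "real dup + card K = real (\<Sum>k\<in>K. m_n n k) + card Z"
    by (metis of_nat_add)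
  have pi: "real (prime_pi (n\<^sup>2)) = 1 + real (card P) + real (card Z)"
    unfolding P Z_def K_def using assms by (simp add: prime_pi_square)
  have "real (\<Sum>k\<in>K. m_n n k) = (\<Sum>p\<in>P. real_of_int ((n\<^sup>2 + p) div (2*p)))"
    using arg_cong[OF sum_m_n_odd_numbers_upto[of "n\<^sup>2" n], of real_of_int]
    by (simp add: K_def P of_int_sum)
  also have "\<dots> = (\<Sum>p\<in>P. real_of_int (n\<^sup>2) / (2*p) + 1 - B p)"
    unfolding B_def P_def by (intro sum.cong refl of_int_div_double) auto
  finally have sum_m: "real (\<Sum>k\<in>K. m_n n k) =
      real_of_int (n\<^sup>2) / 2 * (\<Sum>p\<in>P. 1 / real_of_int p) + card P - (\<Sum>p\<in>P. B p)"
    by (simp add: sum.distrib sum_subtractf sum_distrib_left)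
  moreover have "real (card K) = (real_of_int (n\<^sup>2) - 1) / 2"
    unfolding K_def card_odd_numbers_upto using assms
    by (simp add: of_int_div)
  ultimately show ?thesis
    using pi dup by argo
qed

end
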